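(* Let $q$ be a prime power, let $0 \le n_1 \le n$, and let ${\bf A} = ({\bf A}_1 \mid {\bf A}_2) \in \mathrm{GF}(q)^{a \times n}$ and ${\bf B} = ({\bf B}_1 \mid {\bf B}_2) \in \mathrm{GF}(q)^{b \times n}$, where ${\bf A}_1 \in \mathrm{GF}(q)^{a \times n_1}$ and ${\bf B}_1 \in \mathrm{GF}(q)^{b \times n_1}$. Then for $i = 1$ and $i=2$, $$d_{\mathrm{S}}(R({\bf A}_i), R({\bf B}_i)) \le d_{\mathrm{S}}(R({\bf A}), R({\bf B})) \quad\text{and}\quad d_{\mathrm{I}}(R({\bf A}_i), R({\bf B}_i)) \le d_{\mathrm{I}}(R({\bf A}), R({\bf B})).$$
   Context: For a matrix ${\bf M}$ over $\mathrm{GF}(q)$, $R({\bf M})$ denotes its row space. For subspaces $U,V$ of $\mathrm{GF}(q)^m$, the subspace distance is $d_{\mathrm{S}}(U,V) = \dim(U+V) - \dim(U\cap V) = 2\dim(U+V) - \dim U - \dim V$ and the injection distance is $d_{\mathrm{I}}(U,V) = \dim(U+V) - \min\{\dim U, \dim V\}$. *)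

theory Defs
  imports Complex_Main "HOL-Library.Function_Algebras"
begin

text \<open>Vectors over the field are functions nat => 'a; the ambient space GF(q)^m is
  the set of such functions vanishing outside {..<m}. A matrix is a function
  M :: nat => nat => 'a with M i j the (i,j) entry (indices from 0).\<close>

definition fscale :: "'a::field \<Rightarrow> (nat \<Rightarrow> 'a) \<Rightarrow> (nat \<Rightarrow> 'a)" where
  "fscale c v = (\<lambda>i. c * v i)"

lemma vector_space_fscale: "vector_space (fscale :: 'a::field \<Rightarrow> _)"
  unfolding vector_space_def module_def by (auto simp: fscale_def algebra_simps fun_eq_iff)

definition row_vec :: "(nat \<Rightarrow> nat \<Rightarrow> 'a::field) \<Rightarrow> nat \<Rightarrow> nat \<Rightarrow> (nat \<Rightarrow> 'a)" where
  "row_vec M m i = (\<lambda>j. if j < m then M i j else 0)"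

definition row_space :: "(nat \<Rightarrow> nat \<Rightarrow> 'a::field) \<Rightarrow> nat \<Rightarrow> nat \<Rightarrow> (nat \<Rightarrow> 'a) set" where
  "row_space M r m = module.span fscale {row_vec M m i | i. i < r}"

definition col_shift :: "(nat \<Rightarrow> nat \<Rightarrow> 'a) \<Rightarrow> nat \<Rightarrow> (nat \<Rightarrow> nat \<Rightarrow> 'a)" where
  "col_shift M k = (\<lambda>i j. M i (k + j))"

definition sdim :: "(nat \<Rightarrow> 'a::field) set \<Rightarrow> nat" where
  "sdim U = vector_space.dim fscale U"

definition ssum :: "(nat \<Rightarrow> 'a::field) set \<Rightarrow> (nat \<Rightarrow> 'a) set \<Rightarrow> (nat \<Rightarrow> 'a) set" where
  "ssum U V = module.span fscale (U \<union> V)"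

definition d_S :: "(nat \<Rightarrow> 'a::field) set \<Rightarrow> (nat \<Rightarrow> 'a) set \<Rightarrow> int" where
  "d_S U V = int (sdim (ssum U V)) - int (sdim (U \<inter> V))"

definition d_I :: "(nat \<Rightarrow> 'a::field) set \<Rightarrow> (nat \<Rightarrow> 'a) set \<Rightarrow> int" where
  "d_I U V = int (sdim (ssum U V)) - int (min (sdim U) (sdim V))"

end

theory Submission
  imports Defs "HOL-Library.FuncSet"
begin

text \<open>Both \<open>R(A\<^sub>1)\<close> and \<open>R(A\<^sub>2)\<close> are images of \<open>R(A)\<close> under a coordinate projection
  \<open>p\<close>, and likewise for \<open>B\<close>; so it suffices that no linear map increases either distance.
  Over a finite field a subspace of dimension \<open>d\<close> has \<open>q\<^sup>d\<close> elements, and counting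
  cosets gives both \<open>dim (U + V) + dim (U \<inter> V) = dim U + dim V\<close> and rank--nullity.
  With \<open>S = U + V\<close> and \<open>K = ker p\<close> these yield
  \<open>d\<^sub>S(U,V) - d\<^sub>S(pU,pV) = 2 dim (S \<inter> K) - dim (U \<inter> K) - dim (V \<inter> K)\<close> and
  \<open>d\<^sub>I(U,V) - d\<^sub>I(pU,pV) \<ge> dim (S \<inter> K) - max (dim (U \<inter> K)) (dim (V \<inter> K))\<close>,
  both nonnegative because \<open>U \<inter> K\<close> and \<open>V \<inter> K\<close> lie in \<open>S \<inter> K\<close>.\<close>

lemma card_eq_card_image_mult_card_fiber:
  assumes "finite X" and "\<And>y. y \<in> f ` X \<Longrightarrow> card {x\<in>X. f x = y} = c"
  shows "card X = card (f ` X) * c"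
proof -
  have "card X = card (\<Union>y\<in>f ` X. {x\<in>X. f x = y})"
    by (rule arg_cong[where f = card]) auto
  also have "\<dots> = (\<Sum>y\<in>f ` X. card {x\<in>X. f x = y})"
    by (rule card_UN_disjoint) (use assms(1) in auto)
  also have "\<dots> = card (f ` X) * c"
    using assms(2) by simp
  finally show ?thesis .
qed

lemma one_less_card_UNIV_field: "1 < card (UNIV :: 'a::{field,finite} set)"
proof -
  have "card {0::'a, 1} \<le> card (UNIV :: 'a set)"
    by (rule card_mono) auto
  then show ?thesis
    by simp
qed

lemma card_UNIV_field_power_inject:
  "card (UNIV :: 'a::{field,finite} set) ^ m = card (UNIV :: 'a set) ^ n \<longleftrightarrow> m = n"
  using one_less_card_UNIV_field[where 'a='a] by simp

locale finite_field_vector_space = vector_space scale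
  for scale :: "'a::{field,finite} \<Rightarrow> 'b::ab_group_add \<Rightarrow> 'b" (infixr \<open>*s\<close> 75)
begin

lemma card_span_independent:
  assumes "finite B" and "independent B"
  shows "card (span B) = card (UNIV :: 'a set) ^ card B"
proof -
  let ?comb = "\<lambda>u. \<Sum>v\<in>B. u v *s v"
  have span_eq: "span B = ?comb ` (B \<rightarrow>\<^sub>E UNIV)"
  proof -
    have "?comb u \<in> ?comb ` (B \<rightarrow>\<^sub>E UNIV)" for u
    proof
      show "?comb u = ?comb (restrict u B)"
        by (intro sum.cong) auto
    qed auto
    then show ?thesis
      unfolding span_finite[OF assms(1)] by auto
  qed
  have "inj_on ?comb (B \<rightarrow>\<^sub>E UNIV)"
  proof (rule inj_onI)
    fix u w
    assume u: "u \<in> B \<rightarrow>\<^sub>E UNIV" and w: "w \<in> B \<rightarrow>\<^sub>E UNIV" and eq: "?comb u = ?comb w"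
    have "(\<Sum>v\<in>B. (u v - w v) *s v) = 0"
      using eq by (simp add: scale_left_diff_distrib sum_subtractf)
    then have "u v - w v = 0" if "v \<in> B" for v
      by (rule independentD[OF assms(2) assms(1) order_refl _ that])
    then have "u v = w v" if "v \<in> B" for v
      using that by simp
    then show "u = w"
      using u w by (metis PiE_ext)
  qed
  then show ?thesis
    by (simp add: span_eq card_image card_PiE assms(1))
qed

lemma finite_span:
  assumes "finite W"
  shows "finite (span W)"
proof -
  obtain B where B: "B \<subseteq> W" "independent B" "W \<subseteq> span B"
    using maximal_independent_subset by metis
  have "finite B"
    using finite_subset[OF B(1) assms] .
  moreover have "span W = span B"
    using B(1,3) span_superset by (auto simp: span_eq)
  ultimately show ?thesis
    using card_span_independent[OF _ B(2)] by (intro card_ge_0_finite) (simp add: card_gt_0_iff)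
qed

lemma card_subspace:
  assumes "subspace X" and "finite X"
  shows "card X = card (UNIV :: 'a set) ^ dim X"
proof -
  obtain B where B: "B \<subseteq> X" "independent B" "X \<subseteq> span B" "card B = dim X"
    using basis_exists by metis
  have "span B = X"
    using span_subspace[OF B(1) B(3) assms(1)] .
  then show ?thesis
    using card_span_independent[OF finite_subset[OF B(1) assms(2)] B(2)] B(4) by simp
qed

lemma dim_le_dim_subspace:
  assumes "subspace X" "subspace Y" "finite Y" "X \<subseteq> Y"
  shows "dim X \<le> dim Y"
proof -
  have "card X \<le> card Y"
    using card_mono[OF assms(3,4)] .
  then have "card (UNIV :: 'a set) ^ dim X \<le> card (UNIV :: 'a set) ^ dim Y"
    using card_subspace assms finite_subset[OF assms(4,3)] by simp
  then show ?thesis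
    using one_less_card_UNIV_field power_le_imp_le_exp by blast
qed

lemma dim_sums_Int_finite:
  assumes sU: "subspace U" and sV: "subspace V" and fU: "finite U" and fV: "finite V"
  shows "dim {u + v | u v. u \<in> U \<and> v \<in> V} + dim (U \<inter> V) = dim U + dim V"
proof -
  let ?S = "{u + v | u v. u \<in> U \<and> v \<in> V}" and ?add = "\<lambda>(u, v). u + v"
  have add_image: "?add ` (U \<times> V) = ?S"
    by auto
  have span_U: "span U = U" and span_V: "span V = V"
    using sU sV by simp_all
  have "?S = span (U \<union> V)"
    unfolding span_Un span_U span_V ..
  then have sS: "subspace ?S"
    by simp
  have fS: "finite ?S"
    using finite_imageI[OF finite_cartesian_product[OF fU fV], of ?add] unfolding add_image .
  have fiber: "card {p \<in> U \<times> V. ?add p = s} = card (U \<inter> V)" if hs: "s \<in> ?add ` (U \<times> V)" for s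
  proof -
    obtain u0 v0 where u0: "u0 \<in> U" and v0: "v0 \<in> V" and s: "s = u0 + v0"
      using hs by auto
    have "{p \<in> U \<times> V. ?add p = s} = (\<lambda>x. (u0 + x, v0 - x)) ` (U \<inter> V)"
    proof (intro set_eqI iffI)
      fix p
      assume "p \<in> {p \<in> U \<times> V. ?add p = s}"
      then obtain u v where p: "p = (u, v)" "u \<in> U" "v \<in> V" "u + v = u0 + v0"
        using s by auto
      have diff_eq: "u - u0 = v0 - v"
        using p(4) by (simp add: algebra_simps)
      have "u - u0 \<in> U" "v0 - v \<in> V"
        using subspace_diff[OF sU p(2) u0] subspace_diff[OF sV v0 p(3)] .
      then have "u - u0 \<in> U \<inter> V"
        by (simp add: diff_eq)
      moreover have "p = (u0 + (u - u0), v0 - (v0 - v))"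
        by (simp add: p(1))
      ultimately have "u - u0 \<in> U \<inter> V" and "p = (u0 + (u - u0), v0 - (u - u0))"
        by (simp_all only: diff_eq)
      then show "p \<in> (\<lambda>x. (u0 + x, v0 - x)) ` (U \<inter> V)"
        by (rule rev_image_eqI)
    next
      fix p
      assume "p \<in> (\<lambda>x. (u0 + x, v0 - x)) ` (U \<inter> V)"
      then obtain x where x: "x \<in> U" "x \<in> V" and p: "p = (u0 + x, v0 - x)"
        by blast
      have "u0 + x \<in> U" "v0 - x \<in> V"
        using subspace_add[OF sU u0 x(1)] subspace_diff[OF sV v0 x(2)] .
      then show "p \<in> {p \<in> U \<times> V. ?add p = s}"
        by (simp add: p s)
    qed
    then show ?thesis
      by (simp add: card_image inj_on_def)
  qed
  have fUV: "finite (U \<inter> V)"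
    using fU by blast
  have "card U * card V = card ?S * card (U \<inter> V)"
    using card_eq_card_image_mult_card_fiber[OF finite_cartesian_product[OF fU fV] fiber]
    by (simp only: card_cartesian_product add_image)
  then have "card (UNIV :: 'a set) ^ (dim U + dim V)
      = card (UNIV :: 'a set) ^ (dim ?S + dim (U \<inter> V))"
    by (simp only: power_add card_subspace[OF sU fU] card_subspace[OF sV fV]
        card_subspace[OF sS fS] card_subspace[OF subspace_inter[OF sU sV] fUV])
  then show ?thesis
    by (simp only: card_UNIV_field_power_inject)
qed

lemma dim_image_add_dim_kernel:
  assumes f: "Vector_Spaces.linear scale scale' f" and sX: "subspace X" and fX: "finite X"
  shows "dim X = vector_space.dim scale' (f ` X) + dim (X \<inter> {x. f x = 0})"
proof -
  interpret f: Vector_Spaces.linear scale scale' f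
    by (rule f)
  interpret cod: finite_field_vector_space scale'
    by (rule f.vs2.vector_space_axioms[folded finite_field_vector_space_def])
  let ?K = "X \<inter> {x. f x = 0}"
  have fiber: "card {x \<in> X. f x = y} = card ?K" if hy: "y \<in> f ` X" for y
  proof -
    obtain x0 where x0: "x0 \<in> X" and y: "y = f x0"
      using hy by blast
    have "{x \<in> X. f x = y} = (\<lambda>k. x0 + k) ` ?K"
    proof (intro set_eqI iffI)
      fix x
      assume x: "x \<in> {x \<in> X. f x = y}"
      then have "x - x0 \<in> ?K"
        using subspace_diff[OF sX _ x0] y by (simp add: f.diff)
      then show "x \<in> (\<lambda>k. x0 + k) ` ?K"
        by (rule rev_image_eqI) simp
    next
      fix x
      assume "x \<in> (\<lambda>k. x0 + k) ` ?K"
      then obtain k where "k \<in> X" "f k = 0" "x = x0 + k"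
        by blast
      then show "x \<in> {x \<in> X. f x = y}"
        using subspace_add[OF sX x0] y by (simp add: f.add)
    qed
    then show ?thesis
      by (simp add: card_image inj_on_def)
  qed
  have fK: "finite ?K"
    using fX by blast
  have "card X = card (f ` X) * card ?K"
    by (rule card_eq_card_image_mult_card_fiber[OF fX fiber])
  then have "card (UNIV :: 'a set) ^ dim X
      = card (UNIV :: 'a set) ^ (vector_space.dim scale' (f ` X) + dim ?K)"
    by (simp only: power_add card_subspace[OF sX fX]
        cod.card_subspace[OF f.subspace_image[OF sX] finite_imageI[OF fX]]
        card_subspace[OF subspace_inter[OF sX f.subspace_kernel] fK])
  then show ?thesis
    by (simp only: card_UNIV_field_power_inject)
qed

end

interpretation fs: finite_field_vector_space "fscale :: 'a::{field,finite} \<Rightarrow> (nat \<Rightarrow> 'a) \<Rightarrow> _"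
  unfolding finite_field_vector_space_def by (rule vector_space_fscale)

lemma ssum_eq_sums:
  fixes U V :: "(nat \<Rightarrow> 'a::{field,finite}) set"
  assumes "fs.subspace U" and "fs.subspace V"
  shows "ssum U V = {u + v | u v. u \<in> U \<and> v \<in> V}"
proof -
  have span_U: "fs.span U = U" and span_V: "fs.span V = V"
    using assms by simp_all
  show ?thesis
    unfolding ssum_def fs.span_Un span_U span_V ..
qed

lemma subspace_ssum:
  fixes U V :: "(nat \<Rightarrow> 'a::{field,finite}) set"
  shows "fs.subspace (ssum U V)"
  unfolding ssum_def by simp

lemma finite_ssum:
  fixes U V :: "(nat \<Rightarrow> 'a::{field,finite}) set"
  assumes "fs.subspace U" "fs.subspace V" "finite U" "finite V"
  shows "finite (ssum U V)"
  unfolding ssum_eq_sums[OF assms(1,2)] using assms(3,4) by (simp add: finite_image_set2)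

lemma sdim_ssum_add_sdim_Int:
  fixes U V :: "(nat \<Rightarrow> 'a::{field,finite}) set"
  assumes "fs.subspace U" "fs.subspace V" "finite U" "finite V"
  shows "sdim (ssum U V) + sdim (U \<inter> V) = sdim U + sdim V"
  unfolding sdim_def ssum_eq_sums[OF assms(1,2)] by (rule fs.dim_sums_Int_finite[OF assms])

lemma distances_image_le:
  fixes U V :: "(nat \<Rightarrow> 'a::{field,finite}) set"
  assumes f: "Vector_Spaces.linear fscale fscale f"
    and sU: "fs.subspace U" and sV: "fs.subspace V" and fU: "finite U" and fV: "finite V"
  shows "d_S (f ` U) (f ` V) \<le> d_S U V \<and> d_I (f ` U) (f ` V) \<le> d_I U V"
proof -
  interpret f: Vector_Spaces.linear fscale fscale f
    by (rule f)
  define S where "S = ssum U V"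
  define K where "K = {x. f x = 0}"
  have sS: "fs.subspace S" and fS: "finite S"
    unfolding S_def using subspace_ssum finite_ssum[OF sU sV fU fV] by blast+
  have sK: "fs.subspace K"
    unfolding K_def by (rule f.subspace_kernel)
  have image_S: "ssum (f ` U) (f ` V) = f ` S"
    unfolding ssum_def S_def image_Un[symmetric] f.span_image ..
  have rank_U: "sdim U = sdim (f ` U) + sdim (U \<inter> K)"
    and rank_V: "sdim V = sdim (f ` V) + sdim (V \<inter> K)"
    and rank_S: "sdim S = sdim (f ` S) + sdim (S \<inter> K)"
    unfolding sdim_def K_def using fs.dim_image_add_dim_kernel[OF f] sU sV sS fU fV fS by auto
  have sum_UV: "sdim S + sdim (U \<inter> V) = sdim U + sdim V"
    unfolding S_def by (rule sdim_ssum_add_sdim_Int[OF sU sV fU fV])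
  have sum_fUV: "sdim (f ` S) + sdim (f ` U \<inter> f ` V) = sdim (f ` U) + sdim (f ` V)"
    unfolding image_S[symmetric]
    by (rule sdim_ssum_add_sdim_Int[OF f.subspace_image[OF sU] f.subspace_image[OF sV]])
      (use fU fV in simp_all)
  have "U \<subseteq> S" and "V \<subseteq> S"
    unfolding S_def ssum_def using fs.span_superset by blast+
  then have "sdim (U \<inter> K) \<le> sdim (S \<inter> K)" and "sdim (V \<inter> K) \<le> sdim (S \<inter> K)"
    unfolding sdim_def using fS
    by (auto intro!: fs.dim_le_dim_subspace fs.subspace_inter sU sV sK sS)
  then show ?thesis
    unfolding d_S_def d_I_def image_S S_def[symmetric]
    using rank_U rank_V rank_S sum_UV sum_fUV by (simp add: min_def)
qed

definition coord_window :: "nat \<Rightarrow> nat \<Rightarrow> (nat \<Rightarrow> 'a::zero) \<Rightarrow> nat \<Rightarrow> 'a" where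
  "coord_window k m v = (\<lambda>j. if j < m then v (k + j) else 0)"

lemma linear_coord_window:
  "Vector_Spaces.linear fscale fscale (coord_window k m :: (nat \<Rightarrow> 'a::field) \<Rightarrow> _)"
  unfolding Vector_Spaces.linear_iff using vector_space_fscale
  by (auto simp: coord_window_def fscale_def fun_eq_iff)

lemma col_shift_0 [simp]: "col_shift M 0 = M"
  by (simp add: col_shift_def)

lemma finite_row_space:
  fixes M :: "nat \<Rightarrow> nat \<Rightarrow> 'a::{field,finite}"
  shows "finite (row_space M r m)"
proof -
  have "{row_vec M m i | i. i < r} = row_vec M m ` {..<r}"
    by auto
  then show ?thesis
    unfolding row_space_def by (simp add: fs.finite_span)
qed

lemma subspace_row_space:
  fixes M :: "nat \<Rightarrow> nat \<Rightarrow> 'a::{field,finite}"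
  shows "fs.subspace (row_space M r m)"
  unfolding row_space_def by simp

lemma row_space_col_shift:
  fixes M :: "nat \<Rightarrow> nat \<Rightarrow> 'a::{field,finite}"
  assumes "k + m \<le> n"
  shows "row_space (col_shift M k) r m = coord_window k m ` row_space M r n"
proof -
  interpret p: Vector_Spaces.linear fscale fscale "coord_window k m :: (nat \<Rightarrow> 'a) \<Rightarrow> _"
    by (rule linear_coord_window)
  have "row_vec (col_shift M k) m i = coord_window k m (row_vec M n i)" for i
    using assms by (auto simp: row_vec_def col_shift_def coord_window_def)
  then have "{row_vec (col_shift M k) m i | i. i < r} = coord_window k m ` {row_vec M n i | i. i < r}"
    by auto
  then show ?thesis
    unfolding row_space_def by (simp add: p.span_image)
qed

theorem lemma1:
  fixes A B :: "nat \<Rightarrow> nat \<Rightarrow> 'a::{field,finite}"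
    and a b n n1 :: nat
  assumes "n1 \<le> n"
  shows "d_S (row_space A a n1) (row_space B b n1) \<le> d_S (row_space A a n) (row_space B b n)
       \<and> d_I (row_space A a n1) (row_space B b n1) \<le> d_I (row_space A a n) (row_space B b n)
       \<and> d_S (row_space (col_shift A n1) a (n - n1)) (row_space (col_shift B n1) b (n - n1))
           \<le> d_S (row_space A a n) (row_space B b n)
       \<and> d_I (row_space (col_shift A n1) a (n - n1)) (row_space (col_shift B n1) b (n - n1))
           \<le> d_I (row_space A a n) (row_space B b n)"
proof -
  have window: "d_S (row_space (col_shift A k) a m) (row_space (col_shift B k) b m)
        \<le> d_S (row_space A a n) (row_space B b n)
      \<and> d_I (row_space (col_shift A k) a m) (row_space (col_shift B k) b m)
        \<le> d_I (row_space A a n) (row_space B b n)" if "k + m \<le> n" for k m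
    unfolding row_space_col_shift[OF that]
    by (rule distances_image_le[OF linear_coord_window subspace_row_space subspace_row_space
          finite_row_space finite_row_space])
  show ?thesis
    using window[of 0 n1] window[of n1 "n - n1"] assms by simp
qed

end
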